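(* Let $H$ be a set of at least two pairwise disjoint line segments in the plane, $s\in H$, and $x$ a point of the farthest Voronoi region $V_f(s,H)$. Let $p\in s$ be the point with $d(p,x)=d(s,x)$ and let $r(s,x)$ be the ray emanating from $p$, passing through $x$ and extending to infinity. Then $r(s,x)$ intersects the boundary of $V_f(s,H)$ at a point $a_x$ (lying on the segment from $p$ to $x$), and the unbounded portion of $r(s,x)$ beyond $a_x$ lies entirely in $V_f(s,H)$.
   Context: Distances are Euclidean: $d(x,s)=\min_{q\in s}d(x,q)$. The farthest Voronoi region is $V_f(s,H)=\{x: d(x,s)>d(x,t)\ \forall t\in H\setminus\{s\}\}$. *)

theory Defs
  imports "HOL-Analysis.Analysis"
begin

type_synonym point = "real^2"

definition is_segment :: "point set \<Rightarrow> bool" where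
  "is_segment s \<longleftrightarrow> (\<exists>a b. a \<noteq> b \<and> s = closed_segment a b)"

abbreviation segdist :: "point \<Rightarrow> point set \<Rightarrow> real" where
  "segdist x s \<equiv> infdist x s"

definition farthest_region :: "point set \<Rightarrow> point set set \<Rightarrow> point set" where
  "farthest_region s H = {x. \<forall>t \<in> H - {s}. segdist x s > segdist x t}"

definition ray :: "point \<Rightarrow> point \<Rightarrow> point set" where
  "ray p x = {p + l *\<^sub>R (x - p) | l. l \<ge> 0}"

end

theory Submission
  imports Defs
begin

(* Parametrise the ray r(s,x) as f l = p + l (x - p), l >= 0, and let
   d = dist p x.  Since p is a closest point of the convex set s to x, it stays a
   closest point to every f l, so d(f l, s) = l d grows at full speed along the ray,
   while by the triangle inequality d(f l, t) grows at most at that speed for every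
   other segment t.  Hence membership in V_f(s,H) is upward closed along the ray.
   The point p itself is not in V_f(s,H) (its distance to s is 0), whereas x = f 1 is.
   A general topological lemma then shows that for such an upward closed set the
   threshold parameter l0 = inf {l >= 0. f l in R} lies in [0,1], f l0 is a frontier
   point, and f l is in R for all l > l0.  The theorem follows with a_x = f l0. *)

lemma dist_line_points:
  fixes p x :: "'a::real_normed_vector"
  shows "dist (p + l *\<^sub>R (x - p)) (p + l' *\<^sub>R (x - p)) = \<bar>l - l'\<bar> * dist p x"
proof -
  have "(p + l *\<^sub>R (x - p)) - (p + l' *\<^sub>R (x - p)) = (l - l') *\<^sub>R (x - p)"
    by (simp add: algebra_simps)
  then show ?thesis by (simp add: dist_norm norm_minus_commute)
qed

lemma ray_eq_image: "ray p x = (\<lambda>l. p + l *\<^sub>R (x - p)) ` {0..}"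
  unfolding ray_def by auto

text \<open>If \<open>p\<close> is a closest point of the closed convex set \<open>s\<close> to \<open>x\<close>, then \<open>p\<close> remains a
  closest point to every point of the ray from \<open>p\<close> through \<open>x\<close>; so the distance to \<open>s\<close>
  grows linearly along that ray.\<close>
lemma infdist_along_ray:
  fixes s :: "'a::euclidean_space set"
  assumes "convex s" "closed s" "p \<in> s" "dist p x = infdist x s" "l \<ge> 0"
  shows "infdist (p + l *\<^sub>R (x - p)) s = l * dist p x"
proof -
  let ?y = "p + l *\<^sub>R (x - p)"
  have closest: "\<forall>z\<in>s. dist x p \<le> dist x z"
    using assms(4) infdist_le by (metis dist_commute)
  have "dist ?y p \<le> dist ?y q" if q: "q \<in> s" for q
  proof -
    have obtuse: "inner (x - p) (q - p) \<le> 0"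
      using any_closest_point_dot[OF assms(1,2,3) q closest] .
    have "(dist ?y q)\<^sup>2 = (norm (l *\<^sub>R (x - p)))\<^sup>2 - 2 * l * inner (x - p) (q - p) + (norm (q - p))\<^sup>2"
      by (simp add: dist_norm power2_norm_eq_inner inner_diff inner_commute algebra_simps)
    also have "\<dots> \<ge> (norm (l *\<^sub>R (x - p)))\<^sup>2"
      using mult_nonneg_nonpos[OF _ obtuse, of "2 * l"] assms(5) zero_le_power2[of "norm (q - p)"]
      by linarith
    finally have "(dist ?y p)\<^sup>2 \<le> (dist ?y q)\<^sup>2"
      by (simp add: dist_norm)
    then show ?thesis by (rule power2_le_imp_le[OF _ zero_le_dist])
  qed
  moreover have nonempty: "s \<noteq> {}" using assms(3) by auto
  ultimately have "dist ?y p \<le> infdist ?y s"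
    unfolding infdist_notempty[OF nonempty] by (intro cINF_greatest) auto
  then have "infdist ?y s = dist ?y p"
    using infdist_le[OF assms(3)] by (rule antisym[rotated])
  also have "\<dots> = l * dist p x"
    using assms(5) by (simp add: dist_norm norm_minus_commute)
  finally show ?thesis .
qed

text \<open>Membership in the farthest Voronoi region is upward closed along the ray
  \<open>r(s,x)\<close>: moving outward by \<open>\<delta>\<close> increases the distance to \<open>s\<close> by exactly \<open>\<delta>\<close>
  and the distance to any other set by at most \<open>\<delta>\<close>.\<close>
lemma farthest_region_ray_upward:
  assumes "convex s" "closed s" "p \<in> s" "dist p x = segdist x s"
    and "0 \<le> l" "l \<le> l'" "p + l *\<^sub>R (x - p) \<in> farthest_region s H"
  shows "p + l' *\<^sub>R (x - p) \<in> farthest_region s H"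
  unfolding farthest_region_def
proof (intro CollectI ballI)
  fix t assume t: "t \<in> H - {s}"
  let ?f = "\<lambda>l. p + l *\<^sub>R (x - p)"
  have "segdist (?f l') t \<le> segdist (?f l) t + dist (?f l') (?f l)"
    by (rule infdist_triangle)
  also have "\<dots> < segdist (?f l) s + (l' - l) * dist p x"
    using assms(6,7) t dist_line_points[of p l' x l] unfolding farthest_region_def by auto
  also have "\<dots> = segdist (?f l') s"
    using infdist_along_ray[OF assms(1-4)] assms(5,6) by (simp add: algebra_simps)
  finally show "segdist (?f l') s > segdist (?f l') t" .
qed

lemma point_of_site_not_in_farthest_region:
  assumes "p \<in> s" "t \<in> H - {s}"
  shows "p \<notin> farthest_region s H"
proof -
  have "segdist p t \<ge> segdist p s"
    using assms(1) infdist_nonneg[of p t] by simp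
  moreover have "segdist p t < segdist p s" if "p \<in> farthest_region s H"
    using that assms(2) unfolding farthest_region_def by blast
  ultimately show ?thesis by linarith
qed

lemma ray_threshold_in_frontier:
  fixes R :: "'a::real_normed_vector set" and p x :: 'a
  defines "f \<equiv> \<lambda>l. p + l *\<^sub>R (x - p)"
  assumes p_out: "p \<notin> R" and x_in: "x \<in> R"
    and upward: "\<And>l l'. 0 \<le> l \<Longrightarrow> l \<le> l' \<Longrightarrow> f l \<in> R \<Longrightarrow> f l' \<in> R"
  shows "\<exists>l0 \<in> {0..1}. f l0 \<in> frontier R \<and> (\<forall>l > l0. f l \<in> R)"
proof -
  define L where "L = {l. 0 \<le> l \<and> f l \<in> R}"
  define l0 where "l0 = Inf L"
  define d where "d = dist p x"
  have dist_f: "dist (f l) (f l') = \<bar>l - l'\<bar> * d" for l l'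
    unfolding f_def d_def by (rule dist_line_points)
  have d_pos: "d > 0" using p_out x_in unfolding d_def by auto
  have bdd: "bdd_below L" unfolding L_def by (rule bdd_belowI[of _ 0]) auto
  have one_L: "1 \<in> L" unfolding L_def f_def using x_in by simp
  have zero_L: "0 \<notin> L" unfolding L_def f_def using p_out by simp
  have l0_range: "l0 \<in> {0..1}"
    unfolding l0_def using cInf_lower[OF one_L bdd] one_L
    by (auto intro!: cInf_greatest simp: L_def)
  have beyond: "f l \<in> R" if above: "l > l0" for l
  proof -
    obtain l' where "l' \<in> L" "l' < l"
      using cInf_less_iff[of L l] one_L bdd above unfolding l0_def by auto
    then show ?thesis using upward[of l' l] unfolding L_def by auto
  qed
  have "f l0 \<in> closure R"
    unfolding closure_approachable
  proof (intro allI impI)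
    fix e :: real assume e: "e > 0"
    have "f (l0 + e / (2 * d)) \<in> R" using beyond e d_pos by simp
    moreover have "dist (f (l0 + e / (2 * d))) (f l0) = e / 2"
      unfolding dist_f using e d_pos by simp
    ultimately show "\<exists>y\<in>R. dist y (f l0) < e" using e by force
  qed
  moreover have "f l0 \<notin> interior R"
  proof
    assume "f l0 \<in> interior R"
    then obtain e where e: "e > 0" "ball (f l0) e \<subseteq> R" using mem_interior by blast
    define l where "l = max 0 (l0 - e / (2 * d))"
    have l: "0 \<le> l" "l \<le> l0" "l0 - l \<le> e / (2 * d)"
      using l0_range e d_pos unfolding l_def by auto
    have "dist (f l0) (f l) \<le> e / (2 * d) * d"
      unfolding dist_f using l d_pos by (intro mult_right_mono) auto
    also have "\<dots> < e" using d_pos e by simp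
    finally have "l \<in> L" using e l unfolding L_def by auto
    then have "l0 \<le> l" "l \<noteq> 0" unfolding l0_def using cInf_lower[OF _ bdd] zero_L by auto
    then show False using e d_pos l unfolding l_def by (auto simp: max_def split: if_splits)
  qed
  ultimately show ?thesis using l0_range beyond unfolding frontier_def by blast
qed

theorem lemma6:
  fixes H :: "point set set" and s :: "point set" and x p :: point
  assumes "finite H" and "card H \<ge> 2"
    and "\<forall>t \<in> H. is_segment t"
    and "pairwise disjnt H"
    and "s \<in> H"
    and "x \<in> farthest_region s H"
    and "p \<in> s" and "dist p x = segdist x s"
  shows "\<exists>a \<in> closed_segment p x. a \<in> ray p x \<and> a \<in> frontier (farthest_region s H) \<and>
           (\<forall>y \<in> ray p x. dist p y > dist p a \<longrightarrow> y \<in> farthest_region s H)"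
proof -
  define f where "f = (\<lambda>l::real. p + l *\<^sub>R (x - p))"
  have s_cvx: "convex s" and s_closed: "closed s"
    using assms(3,5) unfolding is_segment_def by auto
  have "H - {s} \<noteq> {}"
  proof
    assume "H - {s} = {}"
    then have "H = {s}" using assms(5) by auto
    then show False using assms(2) by simp
  qed
  then obtain t where "t \<in> H - {s}" by blast
  then have p_out: "p \<notin> farthest_region s H"
    using assms(7) by (rule point_of_site_not_in_farthest_region[rotated])
  obtain l0 where l0: "l0 \<in> {0..1}" "f l0 \<in> frontier (farthest_region s H)"
      and beyond: "\<forall>l > l0. f l \<in> farthest_region s H"
    using ray_threshold_in_frontier[OF p_out assms(6)]
      farthest_region_ray_upward[OF s_cvx s_closed assms(7,8)]
    unfolding f_def by blast
  have dist_p_f: "dist p (f l) = \<bar>l\<bar> * dist p x" for l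
    using dist_line_points[of p 0 x l] by (simp add: f_def dist_commute)
  have "f l0 \<in> closed_segment p x"
    using l0(1) unfolding closed_segment_def f_def
    by (auto intro!: exI[of _ l0] simp: algebra_simps)
  moreover have "\<forall>y \<in> ray p x. dist p y > dist p (f l0) \<longrightarrow> y \<in> farthest_region s H"
    using beyond l0(1) unfolding ray_eq_image f_def[symmetric]
    by (auto simp: dist_p_f mult_less_cancel_right)
  ultimately show ?thesis
    using l0 unfolding ray_eq_image f_def by auto
qed

end
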